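(* Let $X=\{x_j:j\in J\}\subset\mathbb{R}^2$ be finite with $n=|J|$, quadratic min-power centre $s^*$, centroid $M$, and let $r\in J$ be such that $x_r$ is a point of $X$ farthest from $M$. The following are equivalent: (1) $|\Lambda|=1$; (2) $s^*=M_r$; (3) $M_j\in V(x_j)$ for some $j\in J$.
   Context: $P(s)=\sum_{i\in J}\|s-x_i\|^2+\max_{i\in J}\|s-x_i\|^2$; $s^*$ is its unique minimiser; $M=\frac1n\sum_i x_i$; $M_j=\frac{1}{n+1}\big(x_j+\sum_{i\in J}x_i\big)$; $V(x_j)=\{s:\|s-x_j\|=\max_{i\in J}\|s-x_i\|\}$ (the region of $x_j$ in the farthest point Voronoi diagram). A KKT multiplier vector for $s^*$ is $(\lambda_j)_{j\in J}$ with $\lambda_j\geq0$, $\sum_j\lambda_j=1$, $s^*=\sum_j\lambda_jM_j$, and $\lambda_j\big(\|s^*-x_j\|-\max_{i\in J}\|s^*-x_i\|\big)=0$ for all $j$. $|\Lambda|$ denotes the minimum, over all KKT multiplier vectors for $s^*$, of the number of nonzero entries. *)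

theory Defs
  imports "HOL-Analysis.Analysis"
begin

definition maxdist :: "('j \<Rightarrow> real^2) \<Rightarrow> 'j set \<Rightarrow> real^2 \<Rightarrow> real" where
  "maxdist x J s = Max ((\<lambda>i. norm (s - x i)) ` J)"

definition P :: "('j \<Rightarrow> real^2) \<Rightarrow> 'j set \<Rightarrow> real^2 \<Rightarrow> real" where
  "P x J s = (\<Sum>i\<in>J. (norm (s - x i))\<^sup>2) + (maxdist x J s)\<^sup>2"

definition centroid :: "('j \<Rightarrow> real^2) \<Rightarrow> 'j set \<Rightarrow> real^2" where
  "centroid x J = (1 / real (card J)) *\<^sub>R (\<Sum>i\<in>J. x i)"

definition Mj :: "('j \<Rightarrow> real^2) \<Rightarrow> 'j set \<Rightarrow> 'j \<Rightarrow> real^2" where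
  "Mj x J j = (1 / (real (card J) + 1)) *\<^sub>R (x j + (\<Sum>i\<in>J. x i))"

definition Vreg :: "('j \<Rightarrow> real^2) \<Rightarrow> 'j set \<Rightarrow> 'j \<Rightarrow> (real^2) set" where
  "Vreg x J j = {s. norm (s - x j) = maxdist x J s}"

definition is_KKT :: "('j \<Rightarrow> real^2) \<Rightarrow> 'j set \<Rightarrow> real^2 \<Rightarrow> ('j \<Rightarrow> real) \<Rightarrow> bool" where
  "is_KKT x J s lam \<longleftrightarrow>
     (\<forall>j\<in>J. lam j \<ge> 0) \<and> (\<Sum>j\<in>J. lam j) = 1 \<and>
     s = (\<Sum>j\<in>J. lam j *\<^sub>R Mj x J j) \<and>
     (\<forall>j\<in>J. lam j * (norm (s - x j) - maxdist x J s) = 0)"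

definition Lambda_card :: "('j \<Rightarrow> real^2) \<Rightarrow> 'j set \<Rightarrow> real^2 \<Rightarrow> nat" where
  "Lambda_card x J s = (LEAST k. \<exists>lam. is_KKT x J s lam \<and> card {j\<in>J. lam j \<noteq> 0} = k)"

end

theory Submission
  imports Defs
begin

(* P is the upper envelope of the quadratics P_j(s) = sum_i |s - x_i|^2 + |s - x_j|^2, and
   completing the square gives P_j(s) = P_j(M_j) + (n+1) |s - M_j|^2.  Hence M_j in V(x_j)
   forces s* = M_j, and a KKT vector supported on {j} says exactly that.  KKT vectors exist
   because s* lies in the convex hull of the M_j of the pieces active at s*: otherwise a
   separating direction decreases all active pieces at once.  Since M_j = M + (x_j - M)/(n+1),
   the point M_j can lie in V(x_j) only if x_j is the point farthest from M; conversely, if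
   s* = M_r, moving from s* towards M decreases every active piece other than P_r, so P_r is
   active, i.e. M_r in V(x_r). *)

lemma inner_diff_pos_if_norm_le:
  fixes d e :: "'a::real_inner"
  assumes "norm e \<le> norm d" and "e \<noteq> d"
  shows "0 < (d - e) \<bullet> d"
proof -
  have "(norm e)\<^sup>2 \<le> (norm d)\<^sup>2" using assms(1) by (intro power_mono) auto
  moreover have "0 < (norm (d - e))\<^sup>2" using assms(2) by simp
  moreover have "2 * ((d - e) \<bullet> d) = (norm d)\<^sup>2 - (norm e)\<^sup>2 + (norm (d - e))\<^sup>2"
    by (simp add: power2_norm_eq_inner inner_diff_left inner_diff_right inner_commute)
  ultimately show ?thesis by linarith
qed

lemma norm_less_if_dist_scaleR_le:
  fixes d e :: "'a::real_inner"
  assumes t: "0 < t" "t < 1" and closer: "norm (t *\<^sub>R d - e) \<le> norm (t *\<^sub>R d - d)"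
    and "e \<noteq> d"
  shows "norm e < norm d"
proof -
  define A where "A = e \<bullet> e - d \<bullet> d"
  define B where "B = d \<bullet> e - d \<bullet> d"
  have "(norm (t *\<^sub>R d - e))\<^sup>2 \<le> (norm (t *\<^sub>R d - d))\<^sup>2"
    using closer by (intro power_mono) auto
  moreover have "(norm (t *\<^sub>R d - e))\<^sup>2 = t * t * (d \<bullet> d) - 2 * (t * (d \<bullet> e)) + e \<bullet> e"
    by (simp add: power2_norm_eq_inner inner_diff_left inner_diff_right inner_commute algebra_simps)
  moreover have "(norm (t *\<^sub>R d - d))\<^sup>2 = t * t * (d \<bullet> d) - 2 * (t * (d \<bullet> d)) + d \<bullet> d"
    by (simp add: power2_norm_eq_inner inner_diff_left inner_diff_right inner_commute algebra_simps)
  ultimately have "A \<le> 2 * t * B" unfolding A_def B_def by (simp add: algebra_simps)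
  moreover have "2 * B < A"
  proof -
    have "0 < (norm (d - e))\<^sup>2" using \<open>e \<noteq> d\<close> by simp
    then show ?thesis unfolding A_def B_def
      by (simp add: power2_norm_eq_inner inner_diff_left inner_diff_right inner_commute)
  qed
  ultimately have "(1 - t) * B < 0" by (simp add: algebra_simps)
  then have "B < 0" using t by (simp add: mult_less_0_iff)
  then have "t * B < 0" using t by (simp add: mult_pos_neg)
  then have "A < 0" using \<open>A \<le> 2 * t * B\<close> by simp
  then have "(norm e)\<^sup>2 < (norm d)\<^sup>2" unfolding A_def by (simp add: power2_norm_eq_inner)
  then show ?thesis by (rule power2_less_imp_less) simp
qed

lemma maxdist_ge:
  assumes "finite J" and "i \<in> J"
  shows "norm (s - x i) \<le> maxdist x J s"
  unfolding maxdist_def using assms by (intro Max_ge) auto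

lemma maxdist_attained:
  assumes "finite J" and "J \<noteq> {}"
  obtains i where "i \<in> J" and "norm (s - x i) = maxdist x J s"
proof -
  have "maxdist x J s \<in> (\<lambda>i. norm (s - x i)) ` J"
    unfolding maxdist_def using assms by (intro Max_in) auto
  then show ?thesis using that by auto
qed

definition Pj :: "('j \<Rightarrow> real^2) \<Rightarrow> 'j set \<Rightarrow> 'j \<Rightarrow> real^2 \<Rightarrow> real" where
  "Pj x J j s = (\<Sum>i\<in>J. (norm (s - x i))\<^sup>2) + (norm (s - x j))\<^sup>2"

lemma Pj_le_P:
  assumes "finite J" and "j \<in> J"
  shows "Pj x J j s \<le> P x J s"
proof -
  have "(norm (s - x j))\<^sup>2 \<le> (maxdist x J s)\<^sup>2"
    using maxdist_ge[OF assms] by (intro power_mono) auto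
  then show ?thesis unfolding Pj_def P_def by simp
qed

lemma P_eq_Pj:
  assumes "norm (s - x j) = maxdist x J s"
  shows "P x J s = Pj x J j s"
  unfolding Pj_def P_def assms ..

lemma scaleR_Mj: "(real (card J) + 1) *\<^sub>R Mj x J j = x j + sum x J"
  unfolding Mj_def by (simp add: add_nonneg_eq_0_iff)

lemma Mj_diff: "Mj x J i - Mj x J j = (1 / (real (card J) + 1)) *\<^sub>R (x i - x j)"
  unfolding Mj_def by (simp add: algebra_simps)

lemma Mj_eq_centroid_plus:
  assumes "finite J" and "J \<noteq> {}"
  shows "Mj x J j = centroid x J + (1 / (real (card J) + 1)) *\<^sub>R (x j - centroid x J)"
proof -
  define n where "n = real (card J)"
  define C where "C = centroid x J"
  have "n > 0" using assms unfolding n_def by (simp add: card_gt_0_iff)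
  then have "sum x J = n *\<^sub>R C" unfolding C_def centroid_def n_def by simp
  then have "(n + 1) *\<^sub>R (C + (1 / (n + 1)) *\<^sub>R (x j - C)) = x j + sum x J"
    using \<open>n > 0\<close> by (simp add: algebra_simps)
  also have "\<dots> = (n + 1) *\<^sub>R Mj x J j" unfolding n_def scaleR_Mj ..
  finally show ?thesis using \<open>n > 0\<close> unfolding C_def n_def by simp
qed

lemma inj_on_Mj:
  assumes "inj_on x J"
  shows "inj_on (Mj x J) J"
proof (rule inj_onI)
  fix i j assume "i \<in> J" "j \<in> J" "Mj x J i = Mj x J j"
  then have "x i = x j" using Mj_diff[of x J i j] by simp
  then show "i = j" using assms \<open>i \<in> J\<close> \<open>j \<in> J\<close> by (auto dest: inj_onD)
qed

lemma Pj_add: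
  "Pj x J j (a + v) = Pj x J j a + 2 * (real (card J) + 1) * ((a - Mj x J j) \<bullet> v)
     + (real (card J) + 1) * (norm v)\<^sup>2"
proof -
  have sq: "(norm (a + v - y))\<^sup>2 = (norm (a - y))\<^sup>2 + 2 * ((a - y) \<bullet> v) + (norm v)\<^sup>2"
    for y :: "real^2"
  proof -
    have "a + v - y = (a - y) + v" by simp
    then show ?thesis
      by (simp only: power2_norm_eq_inner inner_add_left inner_add_right inner_commute)
  qed
  have "(real (card J) + 1) * ((a - Mj x J j) \<bullet> v)
      = ((real (card J) + 1) *\<^sub>R a - (x j + sum x J)) \<bullet> v"
    by (simp flip: scaleR_Mj scaleR_diff_right)
  also have "\<dots> = (\<Sum>i\<in>J. (a - x i) \<bullet> v) + (a - x j) \<bullet> v"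
    by (simp add: inner_diff_left inner_sum_left sum_subtractf algebra_simps)
  finally have "2 * (real (card J) + 1) * ((a - Mj x J j) \<bullet> v)
      = 2 * (\<Sum>i\<in>J. (a - x i) \<bullet> v) + 2 * ((a - x j) \<bullet> v)"
    by (metis distrib_left mult.assoc)
  moreover have "Pj x J j (a + v) = Pj x J j a + 2 * (\<Sum>i\<in>J. (a - x i) \<bullet> v)
      + 2 * ((a - x j) \<bullet> v) + (real (card J) + 1) * (norm v)\<^sup>2"
  proof -
    have "(\<Sum>i\<in>J. (norm (a + v - x i))\<^sup>2) = (\<Sum>i\<in>J. (norm (a - x i))\<^sup>2)
        + 2 * (\<Sum>i\<in>J. (a - x i) \<bullet> v) + real (card J) * (norm v)\<^sup>2"
      unfolding sq by (simp add: sum.distrib sum_distrib_left)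
    then show ?thesis unfolding Pj_def sq by (simp add: distrib_right)
  qed
  ultimately show ?thesis by linarith
qed

lemma Pj_eq_Pj_Mj:
  "Pj x J j s = Pj x J j (Mj x J j) + (real (card J) + 1) * (norm (s - Mj x J j))\<^sup>2"
  using Pj_add[of x J j "Mj x J j" "s - Mj x J j"] by simp

(* 2 (n+1) ((s - M_i) . v) is the slope of P_i at s in direction v. *)
lemma eventually_Pj_less_P:
  assumes fin: "finite J" and "i \<in> J"
    and descent: "norm (s - x i) = maxdist x J s \<Longrightarrow> (s - Mj x J i) \<bullet> v < 0"
  shows "\<forall>\<^sub>F h in at_right 0. Pj x J i (s + h *\<^sub>R v) < P x J s"
proof -
  define N where "N = real (card J) + 1"
  define g where "g h = 2 * N * ((s - Mj x J i) \<bullet> v) + N * h * (norm v)\<^sup>2" for h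
  have expand: "Pj x J i (s + h *\<^sub>R v) = Pj x J i s + h * g h" for h
    unfolding Pj_add g_def N_def by (simp add: power_mult_distrib power2_eq_square algebra_simps)
  have g_lim: "(g \<longlongrightarrow> 2 * N * ((s - Mj x J i) \<bullet> v)) (at_right 0)"
    unfolding g_def by (auto intro!: tendsto_eq_intros)
  show ?thesis
  proof (cases "norm (s - x i) = maxdist x J s")
    case True
    have "N > 0" unfolding N_def by simp
    then have "2 * N * ((s - Mj x J i) \<bullet> v) < 0" using descent True by (simp add: mult_pos_neg)
    with g_lim have "\<forall>\<^sub>F h in at_right 0. g h < 0" by (rule order_tendstoD)
    then show ?thesis using eventually_at_right_less
    proof eventually_elim
      case (elim h)
      then show ?case using expand P_eq_Pj[OF True] by (simp add: mult_pos_neg)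
    qed
  next
    case False
    then have "norm (s - x i) < maxdist x J s"
      using maxdist_ge[OF fin \<open>i \<in> J\<close>, where s = s and x = x] by simp
    then have "(norm (s - x i))\<^sup>2 < (maxdist x J s)\<^sup>2" by (intro power_strict_mono) auto
    then have "Pj x J i s < P x J s" unfolding Pj_def P_def by simp
    moreover have "((\<lambda>h. Pj x J i s + h * g h) \<longlongrightarrow> Pj x J i s + 0 * (2 * N * ((s - Mj x J i) \<bullet> v)))
        (at_right 0)"
      by (intro tendsto_intros g_lim)
    ultimately have "\<forall>\<^sub>F h in at_right 0. Pj x J i s + h * g h < P x J s"
      by (intro order_tendstoD) simp_all
    then show ?thesis by (simp add: expand)
  qed
qed

lemma P_decreases_along_descent_direction:
  assumes fin: "finite J" and ne: "J \<noteq> {}"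
    and descent: "\<forall>i\<in>J. norm (s - x i) = maxdist x J s \<longrightarrow> (s - Mj x J i) \<bullet> v < 0"
  shows "\<exists>t. P x J t < P x J s"
proof -
  have "\<forall>\<^sub>F h in at_right 0. \<forall>i\<in>J. Pj x J i (s + h *\<^sub>R v) < P x J s"
    using descent by (intro eventually_ball_finite fin ballI eventually_Pj_less_P) auto
  then obtain h where h: "\<forall>i\<in>J. Pj x J i (s + h *\<^sub>R v) < P x J s"
    using eventually_happens' trivial_limit_at_right_real by blast
  obtain i where "i \<in> J" and "norm (s + h *\<^sub>R v - x i) = maxdist x J (s + h *\<^sub>R v)"
    using maxdist_attained[OF fin ne] .
  then have "P x J (s + h *\<^sub>R v) < P x J s" using h P_eq_Pj by metis
  then show ?thesis ..
qed

lemma minimiser_eq_Mj_if_Mj_in_Vreg: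
  assumes fin: "finite J" and smin: "\<forall>t. P x J s \<le> P x J t"
    and "j \<in> J" and V: "Mj x J j \<in> Vreg x J j"
  shows "s = Mj x J j"
proof -
  have "Pj x J j (Mj x J j) + (real (card J) + 1) * (norm (s - Mj x J j))\<^sup>2 = Pj x J j s"
    by (rule Pj_eq_Pj_Mj[symmetric])
  also have "\<dots> \<le> P x J s" using Pj_le_P[OF fin \<open>j \<in> J\<close>] .
  also have "\<dots> \<le> P x J (Mj x J j)" using smin ..
  also have "\<dots> = Pj x J j (Mj x J j)" using V unfolding Vreg_def by (simp add: P_eq_Pj)
  finally have "(real (card J) + 1) * (norm (s - Mj x J j))\<^sup>2 \<le> 0" by simp
  then show ?thesis by (simp add: add_nonneg_eq_0_iff mult_le_0_iff)
qed

lemma farthest_if_Mj_in_Vreg: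
  assumes fin: "finite J" and ne: "J \<noteq> {}" and inj: "inj_on x J"
    and "j \<in> J" and V: "Mj x J j \<in> Vreg x J j"
    and "r \<in> J" and far: "\<forall>i\<in>J. norm (x i - centroid x J) \<le> norm (x r - centroid x J)"
  shows "j = r"
proof (rule ccontr)
  assume "j \<noteq> r"
  define C where "C = centroid x J"
  define t where "t = 1 / (real (card J) + 1)"
  have t: "0 < t" "t < 1" using fin ne unfolding t_def by (auto simp: card_gt_0_iff)
  have Mj: "Mj x J j = C + t *\<^sub>R (x j - C)"
    unfolding C_def t_def by (rule Mj_eq_centroid_plus[OF fin ne])
  have "norm (Mj x J j - x r) \<le> maxdist x J (Mj x J j)" by (rule maxdist_ge[OF fin \<open>r \<in> J\<close>])
  also have "\<dots> = norm (Mj x J j - x j)" using V unfolding Vreg_def by simp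
  finally have "norm (t *\<^sub>R (x j - C) - (x r - C)) \<le> norm (t *\<^sub>R (x j - C) - (x j - C))"
    unfolding Mj by (simp add: algebra_simps)
  moreover have "x r - C \<noteq> x j - C"
    using inj \<open>j \<noteq> r\<close> \<open>j \<in> J\<close> \<open>r \<in> J\<close> by (auto dest: inj_onD)
  ultimately have "norm (x r - C) < norm (x j - C)" by (rule norm_less_if_dist_scaleR_le[OF t])
  with far \<open>j \<in> J\<close> show False unfolding C_def by fastforce
qed

lemma Mj_in_Vreg_if_minimiser_eq_Mj_farthest:
  assumes fin: "finite J" and ne: "J \<noteq> {}" and inj: "inj_on x J"
    and smin: "\<forall>t. P x J s \<le> P x J t"
    and "r \<in> J" and far: "\<forall>i\<in>J. norm (x i - centroid x J) \<le> norm (x r - centroid x J)"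
    and sr: "s = Mj x J r"
  shows "Mj x J r \<in> Vreg x J r"
proof (rule ccontr)
  assume nV: "Mj x J r \<notin> Vreg x J r"
  define C where "C = centroid x J"
  have "(s - Mj x J i) \<bullet> (C - x r) < 0"
    if "i \<in> J" and active: "norm (s - x i) = maxdist x J s" for i
  proof -
    have "i \<noteq> r" using active nV sr unfolding Vreg_def by auto
    then have "x i - C \<noteq> x r - C" using inj \<open>i \<in> J\<close> \<open>r \<in> J\<close> by (auto dest: inj_onD)
    then have "0 < ((x r - C) - (x i - C)) \<bullet> (x r - C)"
      using far \<open>i \<in> J\<close> unfolding C_def by (intro inner_diff_pos_if_norm_le) auto
    moreover have "(s - Mj x J i) \<bullet> (C - x r)
        = - (1 / (real (card J) + 1) * (((x r - C) - (x i - C)) \<bullet> (x r - C)))"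
      unfolding sr Mj_diff inner_scaleR_left by (simp add: inner_diff_right minus_divide_left)
    ultimately show ?thesis by (simp add: mult_pos_pos)
  qed
  then have "\<exists>t. P x J t < P x J s"
    by (intro P_decreases_along_descent_direction[OF fin ne]) blast
  with smin show False by (meson not_le)
qed

lemma minimiser_in_convex_hull_active_Mj:
  assumes fin: "finite J" and ne: "J \<noteq> {}" and smin: "\<forall>t. P x J s \<le> P x J t"
  shows "s \<in> convex hull (Mj x J ` {i\<in>J. norm (s - x i) = maxdist x J s})"
    (is "s \<in> convex hull ?Q")
proof (rule ccontr)
  assume "s \<notin> convex hull ?Q"
  moreover have "closed (convex hull ?Q)"
    using fin by (intro compact_imp_closed finite_imp_compact_convex_hull) simp
  ultimately obtain a b where "a \<bullet> s < b" and sep: "\<forall>y\<in>convex hull ?Q. b < a \<bullet> y"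
    using separating_hyperplane_closed_point[OF convex_convex_hull] by blast
  have "(s - Mj x J i) \<bullet> a < 0" if "i \<in> J" "norm (s - x i) = maxdist x J s" for i
  proof -
    have "Mj x J i \<in> convex hull ?Q" using that by (intro hull_inc) auto
    then have "a \<bullet> s < a \<bullet> Mj x J i" using \<open>a \<bullet> s < b\<close> sep by force
    then show ?thesis by (simp add: inner_commute[of _ a] inner_diff_right)
  qed
  then have "\<exists>t. P x J t < P x J s"
    by (intro P_decreases_along_descent_direction[OF fin ne]) blast
  with smin show False by (meson not_le)
qed

lemma is_KKT_if_in_convex_hull_active_Mj:
  assumes fin: "finite J" and inj: "inj_on x J"
    and hull: "s \<in> convex hull (Mj x J ` {i\<in>J. norm (s - x i) = maxdist x J s})"
  shows "\<exists>lam. is_KKT x J s lam"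
proof -
  define A where "A = {i\<in>J. norm (s - x i) = maxdist x J s}"
  have "finite A" "A \<subseteq> J" using fin unfolding A_def by auto
  have injA: "inj_on (Mj x J) A" using inj_on_Mj[OF inj] \<open>A \<subseteq> J\<close> by (rule inj_on_subset)
  obtain u where u: "\<forall>y\<in>Mj x J ` A. 0 \<le> u y" "sum u (Mj x J ` A) = 1"
      "(\<Sum>y\<in>Mj x J ` A. u y *\<^sub>R y) = s"
  proof -
    have "s \<in> convex hull (Mj x J ` A)" using hull unfolding A_def .
    then show ?thesis
      using that unfolding convex_hull_finite[OF finite_imageI[OF \<open>finite A\<close>]] by blast
  qed
  define lam where "lam i = (if i \<in> A then u (Mj x J i) else 0)" for i
  have "sum lam J = sum lam A"
    using fin \<open>A \<subseteq> J\<close> by (intro sum.mono_neutral_right) (auto simp: lam_def)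
  also have "\<dots> = 1" using u(2) unfolding sum.reindex[OF injA] by (simp add: lam_def)
  finally have "sum lam J = 1" .
  have "(\<Sum>j\<in>J. lam j *\<^sub>R Mj x J j) = (\<Sum>j\<in>A. lam j *\<^sub>R Mj x J j)"
    using fin \<open>A \<subseteq> J\<close> by (intro sum.mono_neutral_right) (auto simp: lam_def)
  also have "\<dots> = s" using u(3) unfolding sum.reindex[OF injA] by (simp add: lam_def)
  finally have "(\<Sum>j\<in>J. lam j *\<^sub>R Mj x J j) = s" .
  moreover have "\<forall>j\<in>J. lam j \<ge> 0" using u(1) by (simp add: lam_def)
  moreover have "\<forall>j\<in>J. lam j * (norm (s - x j) - maxdist x J s) = 0"
    by (simp add: lam_def A_def)
  ultimately have "is_KKT x J s lam" using \<open>sum lam J = 1\<close> unfolding is_KKT_def by simp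
  then show ?thesis by blast
qed

lemma card_support_is_KKT_pos:
  assumes "finite J" and "is_KKT x J s lam"
  shows "card {j\<in>J. lam j \<noteq> 0} > 0"
proof (rule ccontr)
  assume "\<not> card {j\<in>J. lam j \<noteq> 0} > 0"
  then have "\<forall>j\<in>J. lam j = 0" using assms(1) by simp
  then have "sum lam J = 0" by simp
  with assms(2) show False unfolding is_KKT_def by simp
qed

lemma is_KKT_singleton_support_iff:
  assumes fin: "finite J"
  shows "(\<exists>lam. is_KKT x J s lam \<and> card {j\<in>J. lam j \<noteq> 0} = 1)
     \<longleftrightarrow> (\<exists>j\<in>J. s = Mj x J j \<and> Mj x J j \<in> Vreg x J j)"
proof
  assume "\<exists>lam. is_KKT x J s lam \<and> card {j\<in>J. lam j \<noteq> 0} = 1"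
  then obtain lam where KKT: "is_KKT x J s lam" and card1: "card {j\<in>J. lam j \<noteq> 0} = 1"
    by blast
  obtain j where "{j\<in>J. lam j \<noteq> 0} = {j}" using card_1_singletonE[OF card1] .
  then have "j \<in> J" and others: "\<forall>i\<in>J - {j}. lam i = 0" by auto
  have "sum lam J = lam j" "(\<Sum>i\<in>J. lam i *\<^sub>R Mj x J i) = lam j *\<^sub>R Mj x J j"
    using sum.remove[OF fin \<open>j \<in> J\<close>, of lam]
      sum.remove[OF fin \<open>j \<in> J\<close>, of "\<lambda>i. lam i *\<^sub>R Mj x J i"] others by simp_all
  then have "lam j = 1" "s = Mj x J j" using KKT unfolding is_KKT_def by simp_all
  moreover have "lam j * (norm (s - x j) - maxdist x J s) = 0"
    using KKT \<open>j \<in> J\<close> unfolding is_KKT_def by blast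
  ultimately show "\<exists>j\<in>J. s = Mj x J j \<and> Mj x J j \<in> Vreg x J j"
    using \<open>j \<in> J\<close> unfolding Vreg_def by auto
next
  assume "\<exists>j\<in>J. s = Mj x J j \<and> Mj x J j \<in> Vreg x J j"
  then obtain j where "j \<in> J" "s = Mj x J j" and active: "norm (s - x j) = maxdist x J s"
    unfolding Vreg_def by auto
  define lam where "lam i = (if i = j then 1 else 0 :: real)" for i
  have "(\<Sum>i\<in>J. lam i *\<^sub>R Mj x J i) = (\<Sum>i\<in>J. if i = j then Mj x J i else 0)"
    by (intro sum.cong) (auto simp: lam_def)
  also have "\<dots> = s" using \<open>j \<in> J\<close> \<open>s = Mj x J j\<close> fin by simp
  finally have "(\<Sum>i\<in>J. lam i *\<^sub>R Mj x J i) = s" .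
  moreover have "sum lam J = 1" using \<open>j \<in> J\<close> fin by (simp add: lam_def)
  moreover have "\<forall>i\<in>J. lam i * (norm (s - x i) - maxdist x J s) = 0"
    using active by (simp add: lam_def)
  ultimately have "is_KKT x J s lam" unfolding is_KKT_def by (simp add: lam_def)
  moreover have "{i\<in>J. lam i \<noteq> 0} = {j}" using \<open>j \<in> J\<close> by (auto simp: lam_def)
  ultimately show "\<exists>lam. is_KKT x J s lam \<and> card {j\<in>J. lam j \<noteq> 0} = 1"
    by (intro exI[of _ lam]) simp
qed

lemma Lambda_card_eq_1_iff:
  assumes fin: "finite J" and "is_KKT x J s lam"
  shows "Lambda_card x J s = 1 \<longleftrightarrow> (\<exists>j\<in>J. s = Mj x J j \<and> Mj x J j \<in> Vreg x J j)"
proof -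
  define supp where "supp k \<longleftrightarrow> (\<exists>lam. is_KKT x J s lam \<and> card {j\<in>J. lam j \<noteq> 0} = k)" for k
  have Lambda: "Lambda_card x J s = (LEAST k. supp k)" unfolding Lambda_card_def supp_def ..
  have "supp (card {j\<in>J. lam j \<noteq> 0})" using assms(2) unfolding supp_def by blast
  then have "supp (Lambda_card x J s)" unfolding Lambda by (rule LeastI)
  moreover have "supp 1 \<Longrightarrow> Lambda_card x J s = 1"
    unfolding Lambda supp_def using card_support_is_KKT_pos[OF fin]
    by (intro Least_equality) (auto simp: Suc_le_eq)
  ultimately show ?thesis
    using is_KKT_singleton_support_iff[OF fin] unfolding supp_def by metis
qed

theorem proposition1:
  fixes x :: "'j \<Rightarrow> real^2" and J :: "'j set" and s :: "real^2" and r :: 'j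
  assumes "finite J" and "J \<noteq> {}" and "inj_on x J"
    and smin: "\<forall>t. P x J s \<le> P x J t"
    and "r \<in> J" and far: "\<forall>i\<in>J. norm (x i - centroid x J) \<le> norm (x r - centroid x J)"
  shows "(Lambda_card x J s = 1 \<longleftrightarrow> s = Mj x J r)
       \<and> (s = Mj x J r \<longleftrightarrow> (\<exists>j\<in>J. Mj x J j \<in> Vreg x J j))"
proof -
  note fin = assms(1) and ne = assms(2) and inj = assms(3)
  have some_Mj_in_Vreg_iff: "(\<exists>j\<in>J. Mj x J j \<in> Vreg x J j) \<longleftrightarrow> Mj x J r \<in> Vreg x J r \<and> s = Mj x J r"
    using minimiser_eq_Mj_if_Mj_in_Vreg[OF fin smin] farthest_if_Mj_in_Vreg[OF fin ne inj]
      \<open>r \<in> J\<close> far by blast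
  have "s = Mj x J r \<longleftrightarrow> (\<exists>j\<in>J. Mj x J j \<in> Vreg x J j)"
    using some_Mj_in_Vreg_iff Mj_in_Vreg_if_minimiser_eq_Mj_farthest[OF fin ne inj smin \<open>r \<in> J\<close> far]
    by blast
  moreover obtain lam where "is_KKT x J s lam"
    using is_KKT_if_in_convex_hull_active_Mj[OF fin inj]
      minimiser_in_convex_hull_active_Mj[OF fin ne smin] by blast
  then have "Lambda_card x J s = 1 \<longleftrightarrow> (\<exists>j\<in>J. Mj x J j \<in> Vreg x J j)"
    using Lambda_card_eq_1_iff[OF fin] some_Mj_in_Vreg_iff \<open>r \<in> J\<close> by blast
  ultimately show ?thesis by blast
qed

end
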